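(* Let $\tau=(1+\sqrt5)/2$, let $\kappa\ge 0$, let $\mathcal{D}_1,\mathcal{D}_2,\mathcal{D}_3$ be the Dunkl operators of the icosahedral root system with parameter $\kappa$, and let $\mathcal{I}$ be the vertex set of the icosahedron, all as described in the context. For $y_0\in\mathcal{I}$ let $F(r,x;y_0)=\left(1-r\langle x,y_0\rangle\right)^{-1}\prod_{y\in\mathcal{I}}\left(1-r\langle x,y\rangle\right)^{-\kappa}$, regarded as a power series in $r$ whose coefficients are polynomials in $x\in\mathbb{R}^3$, with Dunkl operators applied coefficientwise. Then for every $u\in\mathbb{R}^3$ and every $y_0\in\mathcal{I}$, \[ \langle u,\nabla_\kappa\rangle F(r,x;y_0)=\langle u,y_0\rangle\left(\left(r^2\frac{\partial}{\partial r}+r(1+11\kappa)\right)F(r,x;y_0)-\kappa r\,F(-r,x;y_0)\right), \] where $\langle u,\nabla_\kappa\rangle=\sum_{i=1}^3u_i\mathcal{D}_i$.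
   Context: Let $\tau=(1+\sqrt5)/2$ (so $\tau^2=\tau+1$). Vectors in $\mathbb{R}^3$ are row vectors; $\langle x,y\rangle=\sum x_iy_i$, $|x|^2=\langle x,x\rangle$. For $v\neq0$ the reflection $\sigma_v$ is $x\sigma_v=x-2\frac{\langle x,v\rangle}{|v|^2}v$. The positive roots of type $H_3$ are the 15 vectors $R_+=\{(2,0,0),(0,2,0),(0,0,2),(\tau,\pm\tau^{-1},\pm1),(\pm1,\tau,\pm\tau^{-1}),(\tau^{-1},\pm1,\tau),(-\tau^{-1},1,\tau),(\tau^{-1},1,-\tau)\}$ (signs chosen independently). With a real parameter $\kappa\ge0$, the Dunkl operators are $\mathcal{D}_if(x)=\frac{\partial f}{\partial x_i}(x)+\kappa\sum_{v\in R_+}\frac{f(x)-f(x\sigma_v)}{\langle x,v\rangle}v_i$, $i=1,2,3$. The icosahedron vertex set is $\mathcal{I}=\{(0,\pm\tau,\pm1),(\pm1,0,\pm\tau),(\pm\tau,\pm1,0)\}$ (12 points). *)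

theory Defs
  imports "HOL-Analysis.Analysis" "HOL-Computational_Algebra.Formal_Power_Series"
begin

text \<open>Points of R^3 are modelled as real^3 (index type 3, indices 1,2,3);
  the inner product is the standard one.\<close>

definition vec3 :: "real \<Rightarrow> real \<Rightarrow> real \<Rightarrow> real^3" where
  "vec3 a b c = (\<chi> i. if i = 1 then a else if i = 2 then b else c)"

definition tau :: real where
  "tau = (1 + sqrt 5) / 2"

definition refl :: "real^3 \<Rightarrow> real^3 \<Rightarrow> real^3" where
  "refl v x = x - (2 * inner x v / (norm v)\<^sup>2) *\<^sub>R v"

definition Rplus :: "(real^3) set" where
  "Rplus = {vec3 2 0 0, vec3 0 2 0, vec3 0 0 2}
     \<union> {vec3 tau (s * inverse tau) t | s t. s \<in> {1, -1} \<and> t \<in> {1, -1}}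
     \<union> {vec3 s tau (t * inverse tau) | s t. s \<in> {1, -1} \<and> t \<in> {1, -1}}
     \<union> {vec3 (inverse tau) s tau | s. s \<in> {1, -1}}
     \<union> {vec3 (- inverse tau) 1 tau, vec3 (inverse tau) 1 (- tau)}"

definition Ico :: "(real^3) set" where
  "Ico = {vec3 0 (s * tau) t | s t. s \<in> {1, -1} \<and> t \<in> {1, -1}}
     \<union> {vec3 s 0 (t * tau) | s t. s \<in> {1, -1} \<and> t \<in> {1, -1}}
     \<union> {vec3 (s * tau) t 0 | s t. s \<in> {1, -1} \<and> t \<in> {1, -1}}"

definition partial :: "3 \<Rightarrow> (real^3 \<Rightarrow> real) \<Rightarrow> real^3 \<Rightarrow> real" where
  "partial i f x = deriv (\<lambda>t. f (x + t *\<^sub>R axis i 1)) 0"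

text \<open>Dunkl operator D_i with parameter kappa.  The difference quotient is only
  meaningful off the reflecting hyperplanes; see the theorem's hypothesis.\<close>
definition Dunkl :: "real \<Rightarrow> 3 \<Rightarrow> (real^3 \<Rightarrow> real) \<Rightarrow> real^3 \<Rightarrow> real" where
  "Dunkl \<kappa> i f x = partial i f x
     + \<kappa> * (\<Sum>v\<in>Rplus. (f x - f (refl v x)) / inner x v * v $ i)"

text \<open>The formal power series (in r) (1 - c r)^(-a), via the binomial series.\<close>
definition binom_series :: "real \<Rightarrow> real \<Rightarrow> real fps" where
  "binom_series a c = fps_binomial (- a) oo (fps_const (- c) * fps_X)"

definition Fser :: "real \<Rightarrow> real^3 \<Rightarrow> real^3 \<Rightarrow> real fps" where
  "Fser \<kappa> y0 x = inverse (1 - fps_const (inner x y0) * fps_X)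
      * (\<Prod>y\<in>Ico. binom_series \<kappa> (inner x y))"

end

theory Submission
  imports Defs
begin

(* Write G(a) = (1 - a r)^-1 and H(x) = prod_{y in I} (1 - r<x,y>)^-kappa, so that F = G(<x,y0>) H(x);
   the Dunkl operators act on the coefficients, which are smooth in x.  The gradient part is read
   off from the logarithmic derivative of F.  Every reflection of H3 permutes I, so H(x sigma_v) = H(x),
   and G(a) - G(b) = (a - b) r G(a) G(b) turns the v-th difference quotient into
   r G(<x,y0>) H(x) <u, y0 - y0 sigma_v> G(<x, y0 sigma_v>); summed over the positive roots this
   becomes a sum over the vertices of the icosahedron.  What remains is an identity of power series
   in r that follows from (1 - a r) G(a) = 1, from H(x)(-r) = H(x)(r) (as I = -I), and from |I| = 12. *)

lemma tau_square: "tau * tau = tau + 1"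
  unfolding tau_def by (simp add: field_simps)

lemma tau_gt_1: "tau > 1"
  unfolding tau_def by simp

lemma tau_lt_2: "tau < 2"
proof -
  have "sqrt 5 < 3"
    by (rule real_less_lsqrt) auto
  then show ?thesis
    unfolding tau_def by simp
qed

lemma inverse_tau: "inverse tau = tau - 1"
  using tau_square tau_gt_1 by (simp add: field_simps)

lemma tau_mult_tau_left: "tau * (tau * z) = tau * z + z"
  by (simp add: mult.assoc[symmetric] tau_square algebra_simps)

(* Together with algebra_simps these rewrite every coordinate occurring below to the form a + b * tau
   with rational a, b, so that equal points of Q(tau)^3 become syntactically equal. *)
lemmas tau_simps = inverse_tau tau_square tau_mult_tau_left

lemma vec3_nth [simp]: "vec3 a b c $ 1 = a" "vec3 a b c $ 2 = b" "vec3 a b c $ 3 = c"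
  by (simp_all add: vec3_def)

lemma vec3_eq_iff: "vec3 a b c = vec3 a' b' c' \<longleftrightarrow> a = a' \<and> b = b' \<and> c = c'"
  by (auto simp: vec_eq_iff forall_3)

lemma uminus_vec3: "- vec3 a b c = vec3 (- a) (- b) (- c)"
  by (simp add: vec_eq_iff forall_3)

lemma inner_vec3: "inner (vec3 a b c) (vec3 a' b' c') = a * a' + b * b' + c * c'"
  by (simp add: inner_vec_def sum_3)

lemma inner_refl_left: "inner (refl v x) y = inner x (refl v y)"
  unfolding refl_def by (simp add: inner_diff_left inner_diff_right inner_commute algebra_simps)

lemma refl_refl: "refl v (refl v x) = x"
proof (cases "v = 0")
  case False
  then show ?thesis
    by (simp add: refl_def inner_diff_left power2_norm_eq_inner field_simps)
qed (simp add: refl_def)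

lemma diff_refl: "y - refl v y = (2 * inner y v / (norm v)\<^sup>2) *\<^sub>R v"
  by (simp add: refl_def)

lemma refl_vec3:
  assumes "a * a + b * b + c * c = 4"
  shows "refl (vec3 a b c) (vec3 d e f) =
    (let s = (d * a + e * b + f * c) / 2 in vec3 (d - s * a) (e - s * b) (f - s * c))"
  using assms unfolding refl_def power2_norm_eq_inner inner_vec3
  by (simp add: vec_eq_iff forall_3 Let_def field_simps)

section \<open>The root system H3 and the icosahedron\<close>

definition roots_list :: "(real^3) list" where
  "roots_list = [vec3 2 0 0, vec3 0 2 0, vec3 0 0 2,
     vec3 tau (inverse tau) 1, vec3 tau (inverse tau) (-1),
     vec3 tau (- inverse tau) 1, vec3 tau (- inverse tau) (-1),
     vec3 1 tau (inverse tau), vec3 1 tau (- inverse tau),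
     vec3 (-1) tau (inverse tau), vec3 (-1) tau (- inverse tau),
     vec3 (inverse tau) 1 tau, vec3 (inverse tau) (-1) tau,
     vec3 (- inverse tau) 1 tau, vec3 (inverse tau) 1 (- tau)]"

definition ico_list :: "(real^3) list" where
  "ico_list = [vec3 0 tau 1, vec3 0 tau (-1), vec3 0 (- tau) 1, vec3 0 (- tau) (-1),
     vec3 1 0 tau, vec3 1 0 (- tau), vec3 (-1) 0 tau, vec3 (-1) 0 (- tau),
     vec3 tau 1 0, vec3 tau (-1) 0, vec3 (- tau) 1 0, vec3 (- tau) (-1) 0]"

lemma set_sign_choices2:
  "{f s t | s t. s \<in> {1::real, -1} \<and> t \<in> {1::real, -1}} = {f 1 1, f 1 (-1), f (-1) 1, f (-1) (-1)}"
  by auto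

lemma set_sign_choices: "{f s | s. s \<in> {1::real, -1}} = {f 1, f (-1)}"
  by auto

lemma Rplus_eq: "Rplus = set roots_list"
  unfolding Rplus_def roots_list_def set_sign_choices set_sign_choices2 by auto

lemma Ico_eq: "Ico = set ico_list"
  unfolding Ico_def ico_list_def set_sign_choices set_sign_choices2 by auto

lemma distinct_roots_list: "distinct roots_list"
  using tau_gt_1 tau_lt_2 unfolding roots_list_def by (auto simp: vec3_eq_iff inverse_tau)

lemma distinct_ico_list: "distinct ico_list"
  using tau_gt_1 tau_lt_2 unfolding ico_list_def by (auto simp: vec3_eq_iff)

lemma finite_Ico: "finite Ico"
  by (simp add: Ico_eq)

lemma card_Ico: "card Ico = 12"
  unfolding Ico_eq distinct_card[OF distinct_ico_list] by (simp add: ico_list_def)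

lemma refl_in_Ico: "v \<in> Rplus \<Longrightarrow> y \<in> Ico \<Longrightarrow> refl v y \<in> Ico"
  unfolding Rplus_eq Ico_eq roots_list_def ico_list_def
  apply (simp only: set_simps insert_iff empty_iff simp_thms)
  apply (elim disjE)
  apply (simp_all add: refl_vec3 Let_def tau_simps algebra_simps vec3_eq_iff)
  done

lemma refl_image_Ico: "v \<in> Rplus \<Longrightarrow> refl v ` Ico = Ico"
  by (rule endo_inj_surj[OF finite_Ico])
    (auto simp: refl_in_Ico intro: inj_on_inverseI[of _ "refl v"] refl_refl)

lemma uminus_image_Ico: "uminus ` Ico = Ico"
  by (auto simp: Ico_eq ico_list_def uminus_vec3)

(* Five positive roots are orthogonal to y0; the other ten reflections carry y0 to the ten vertices
   other than y0 and -y0, one each. *)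
lemma sum_Rplus_refl:
  fixes h :: "real^3 \<Rightarrow> 'a::comm_ring_1"
  assumes "y0 \<in> Ico"
  shows "(\<Sum>v\<in>Rplus. h (refl v y0)) = 5 * h y0 + (\<Sum>y\<in>Ico. h y) - h y0 - h (- y0)"
proof -
  have "y0 \<in> set ico_list"
    using assms by (simp add: Ico_eq)
  then show ?thesis
    unfolding Rplus_eq Ico_eq sum.distinct_set_conv_list[OF distinct_roots_list]
      sum.distinct_set_conv_list[OF distinct_ico_list]
    unfolding roots_list_def ico_list_def
    apply (simp only: set_simps insert_iff empty_iff simp_thms)
    apply (elim disjE)
    apply (simp_all add: refl_vec3 uminus_vec3 Let_def tau_simps algebra_simps)
    done
qed

lemma prod_Ico_refl:
  assumes "v \<in> Rplus"
  shows "(\<Prod>y\<in>Ico. f (inner (refl v x) y)) = (\<Prod>y\<in>Ico. f (inner x y))"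
proof -
  have "(\<Prod>y\<in>Ico. f (inner (refl v x) y)) = (\<Prod>y\<in>refl v ` Ico. f (inner x y))"
    by (simp add: inner_refl_left prod.reindex inj_on_inverseI[of _ "refl v"] refl_refl)
  then show ?thesis
    by (simp add: refl_image_Ico[OF assms])
qed

lemma prod_Ico_uminus: "(\<Prod>y\<in>Ico. f (- y)) = (\<Prod>y\<in>Ico. f y)"
  by (subst uminus_image_Ico[symmetric]) (simp add: prod.reindex)

section \<open>The binomial series\<close>

lemma binom_series_nth: "fps_nth (binom_series a c) n = (- c) ^ n * ((- a) gchoose n)"
  by (simp add: binom_series_def)

lemma binom_series_add: "binom_series (a + b) c = binom_series a c * binom_series b c"
  unfolding binom_series_def minus_add_distrib fps_binomial_add_mult
  by (rule fps_compose_mult_distrib) simp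

lemma inverse_one_minus_eq_binom_series: "inverse (1 - fps_const c * fps_X) = binom_series 1 c"
  using one_minus_fps_X_const_neg_power[of c 1] by (simp add: binom_series_def)

lemma binom_series_one_mult: "binom_series 1 c * (1 - fps_const c * fps_X) = 1"
  unfolding inverse_one_minus_eq_binom_series[symmetric] by (rule inverse_mult_eq_1) simp

lemma binom_series_one_diff:
  "binom_series 1 a - binom_series 1 b = fps_const (a - b) * fps_X * binom_series 1 a * binom_series 1 b"
  using binom_series_one_mult[of a] binom_series_one_mult[of b]
  by (simp flip: fps_const_sub) algebra

lemma binom_series_compose_uminus: "binom_series a c oo - fps_X = binom_series a (- c)"
  by (rule fps_ext) (simp add: fps_compose_uminus' binom_series_nth power_mult_distrib[symmetric])

lemma gbinomial_absorption_uminus: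
  "of_nat (Suc n) * ((- a) gchoose Suc n) = - a * ((- (a + 1)) gchoose n)"
  using gbinomial_absorption[of n "- a"] by simp

lemma fps_deriv_binom_series: "fps_deriv (binom_series a c) = fps_const (a * c) * binom_series (a + 1) c"
proof (rule fps_ext)
  fix n
  have "(- c) ^ n * c * (of_nat (Suc n) * ((- a) gchoose Suc n))
      = (- c) ^ n * c * (- a * ((- (a + 1)) gchoose n))"
    by (simp only: gbinomial_absorption_uminus)
  then show "fps_nth (fps_deriv (binom_series a c)) n = fps_nth (fps_const (a * c) * binom_series (a + 1) c) n"
    by (simp add: binom_series_nth algebra_simps)
qed

lemma binom_series_nth_has_derivative:
  "((\<lambda>c. fps_nth (binom_series a c) n) has_real_derivative
     fps_nth (fps_const a * fps_X * binom_series (a + 1) c) n) (at c)"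
proof (cases n)
  case 0
  then show ?thesis
    by (simp add: binom_series_nth)
next
  case (Suc m)
  have "((\<lambda>c. (- c) ^ Suc m) has_real_derivative (1 + of_nat m) * (- 1 * (- c) ^ m)) (at c)"
    by (intro DERIV_power_Suc DERIV_minus DERIV_ident)
  then have "((\<lambda>c. (- c) ^ Suc m * ((- a) gchoose Suc m)) has_real_derivative
      - ((- c) ^ m * (of_nat (Suc m) * ((- a) gchoose Suc m)))) (at c)"
    by (rule DERIV_cong[OF DERIV_cmult_right]) (simp add: algebra_simps)
  also have "- ((- c) ^ m * (of_nat (Suc m) * ((- a) gchoose Suc m)))
      = fps_nth (fps_const a * fps_X * binom_series (a + 1) c) (Suc m)"
    unfolding gbinomial_absorption_uminus by (simp add: mult.assoc fps_X_mult_nth binom_series_nth)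
  finally show ?thesis
    unfolding Suc binom_series_nth .
qed

lemma fps_deriv_prod_logarithmic:
  assumes "finite S" and "\<And>y. y \<in> S \<Longrightarrow> fps_deriv (f y) = f y * w y"
  shows "fps_deriv (\<Prod>y\<in>S. f y) = (\<Prod>y\<in>S. f y) * (\<Sum>y\<in>S. w y)"
  using assms by (induction S rule: finite_induct) (simp_all add: algebra_simps)

section \<open>Coefficientwise derivatives of power series\<close>

(* fps carries no topology, so derivatives of power series depending on a parameter are taken
   coefficient by coefficient. *)
definition has_fps_coeff_derivative :: "('a::real_normed_field \<Rightarrow> 'a fps) \<Rightarrow> 'a fps \<Rightarrow> 'a \<Rightarrow> bool" where
  "has_fps_coeff_derivative f f' t \<longleftrightarrow>
     (\<forall>n. ((\<lambda>s. fps_nth (f s) n) has_field_derivative fps_nth f' n) (at t))"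

lemma has_fps_coeff_derivative_const: "has_fps_coeff_derivative (\<lambda>s. c) 0 t"
  unfolding has_fps_coeff_derivative_def by simp

lemma has_fps_coeff_derivative_mult:
  assumes "has_fps_coeff_derivative f f' t" and "has_fps_coeff_derivative g g' t"
  shows "has_fps_coeff_derivative (\<lambda>s. f s * g s) (f' * g t + f t * g') t"
  unfolding has_fps_coeff_derivative_def
proof
  fix n
  have "((\<lambda>s. \<Sum>i=0..n. fps_nth (f s) i * fps_nth (g s) (n - i)) has_field_derivative
      (\<Sum>i=0..n. fps_nth f' i * fps_nth (g t) (n - i) + fps_nth (f t) i * fps_nth g' (n - i))) (at t)"
    using assms unfolding has_fps_coeff_derivative_def
    by (intro DERIV_sum) (auto intro!: derivative_eq_intros simp: algebra_simps)
  then show "((\<lambda>s. fps_nth (f s * g s) n) has_field_derivative fps_nth (f' * g t + f t * g') n) (at t)"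
    by (simp add: fps_mult_nth sum.distrib)
qed

lemma has_fps_coeff_derivative_prod:
  assumes "finite S" and "\<And>y. y \<in> S \<Longrightarrow> has_fps_coeff_derivative (f y) (f y t * w y) t"
  shows "has_fps_coeff_derivative (\<lambda>s. \<Prod>y\<in>S. f y s) ((\<Prod>y\<in>S. f y t) * (\<Sum>y\<in>S. w y)) t"
  using assms
proof (induction S rule: finite_induct)
  case empty
  show ?case
    using has_fps_coeff_derivative_const[of 1 t] by simp
next
  case (insert a S)
  have "has_fps_coeff_derivative (\<lambda>s. f a s * (\<Prod>y\<in>S. f y s))
      (f a t * w a * (\<Prod>y\<in>S. f y t) + f a t * ((\<Prod>y\<in>S. f y t) * (\<Sum>y\<in>S. w y))) t"
    using insert by (intro has_fps_coeff_derivative_mult) auto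
  then show ?case
    using insert by (simp add: algebra_simps)
qed

lemma has_fps_coeff_derivative_binom_series:
  "has_fps_coeff_derivative (\<lambda>t. binom_series a (c + t * d))
     (fps_const (a * d) * fps_X * binom_series (a + 1) c) 0"
  unfolding has_fps_coeff_derivative_def
proof
  fix n
  have "((\<lambda>t. c + t * d) has_real_derivative d) (at 0)"
    by (auto intro!: derivative_eq_intros)
  from DERIV_chain'[OF this binom_series_nth_has_derivative[of a n "c + 0 * d"]]
  have "((\<lambda>t. fps_nth (binom_series a (c + t * d)) n) has_real_derivative
      d * fps_nth (fps_const a * fps_X * binom_series (a + 1) c) n) (at 0)"
    by (simp add: mult.commute)
  moreover have "fps_const (a * d) * fps_X * binom_series (a + 1) c
      = fps_const d * (fps_const a * fps_X * binom_series (a + 1) c)"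
    by (simp add: ac_simps)
  ultimately show "((\<lambda>t. fps_nth (binom_series a (c + t * d)) n) has_real_derivative
      fps_nth (fps_const (a * d) * fps_X * binom_series (a + 1) c) n) (at 0)"
    by (simp only: fps_mult_left_const_nth)
qed

lemma partial_fps_nth:
  assumes "has_fps_coeff_derivative (\<lambda>t. F (x + t *\<^sub>R axis i 1)) F' 0"
  shows "partial i (\<lambda>z. fps_nth (F z) n) x = fps_nth F' n"
  using assms unfolding partial_def has_fps_coeff_derivative_def by (blast intro: DERIV_imp_deriv)

section \<open>Dunkl operators applied coefficientwise\<close>

lemma sum_axis_fps_const_inner:
  "(\<Sum>i\<in>UNIV. fps_const (u $ i) * fps_const (inner (axis i 1) y)) = fps_const (inner u (y :: real^'n))"
  unfolding inner_axis' by (rule fps_ext) (simp add: fps_sum_nth inner_vec_def)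

lemma Dunkl_fps:
  assumes "\<And>i. has_fps_coeff_derivative (\<lambda>t. F (x + t *\<^sub>R axis i 1)) (F' (axis i 1)) 0"
  shows "Abs_fps (\<lambda>n. \<Sum>i\<in>UNIV. u $ i * Dunkl \<kappa> i (\<lambda>z. fps_nth (F z) n) x)
    = (\<Sum>i\<in>UNIV. fps_const (u $ i) * F' (axis i 1))
      + fps_const \<kappa> * (\<Sum>v\<in>Rplus. fps_const (inner u v / inner x v) * (F x - F (refl v x)))"
proof (rule fps_ext)
  fix n
  define d where "d v = fps_nth (F x) n - fps_nth (F (refl v x)) n" for v
  have "(\<Sum>i\<in>UNIV. u $ i * Dunkl \<kappa> i (\<lambda>z. fps_nth (F z) n) x)
      = (\<Sum>i\<in>UNIV. u $ i * fps_nth (F' (axis i 1)) n)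
        + \<kappa> * (\<Sum>i\<in>UNIV. u $ i * (\<Sum>v\<in>Rplus. d v / inner x v * v $ i))"
    unfolding Dunkl_def partial_fps_nth[OF assms] d_def
    by (simp add: algebra_simps sum.distrib sum_distrib_left)
  also have "(\<Sum>i\<in>UNIV. u $ i * (\<Sum>v\<in>Rplus. d v / inner x v * v $ i))
      = (\<Sum>v\<in>Rplus. inner u v / inner x v * d v)"
    by (simp add: inner_vec_def sum_distrib_left sum_divide_distrib sum.swap[of _ UNIV] algebra_simps)
  finally show "fps_nth (Abs_fps (\<lambda>n. \<Sum>i\<in>UNIV. u $ i * Dunkl \<kappa> i (\<lambda>z. fps_nth (F z) n) x)) n
      = fps_nth ((\<Sum>i\<in>UNIV. fps_const (u $ i) * F' (axis i 1))
          + fps_const \<kappa> * (\<Sum>v\<in>Rplus. fps_const (inner u v / inner x v) * (F x - F (refl v x)))) n"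
    by (simp add: d_def fps_sum_nth)
qed

section \<open>The generating function F\<close>

definition ico_prod :: "real \<Rightarrow> real^3 \<Rightarrow> real fps" where
  "ico_prod \<kappa> x = (\<Prod>y\<in>Ico. binom_series \<kappa> (inner x y))"

definition ico_sum :: "(real^3 \<Rightarrow> real) \<Rightarrow> real^3 \<Rightarrow> real fps" where
  "ico_sum f x = (\<Sum>y\<in>Ico. fps_const (f y) * binom_series 1 (inner x y))"

lemma Fser_eq: "Fser \<kappa> y0 x = binom_series 1 (inner x y0) * ico_prod \<kappa> x"
  by (simp add: Fser_def ico_prod_def inverse_one_minus_eq_binom_series)

lemma ico_prod_refl: "v \<in> Rplus \<Longrightarrow> ico_prod \<kappa> (refl v x) = ico_prod \<kappa> x"
  unfolding ico_prod_def by (rule prod_Ico_refl)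

lemma ico_prod_compose_uminus: "ico_prod \<kappa> x oo - fps_X = ico_prod \<kappa> x"
proof -
  have "ico_prod \<kappa> x oo - fps_X = (\<Prod>y\<in>Ico. binom_series \<kappa> (inner x (- y)))"
    unfolding ico_prod_def by (simp add: fps_compose_prod_distrib binom_series_compose_uminus)
  then show ?thesis
    using prod_Ico_uminus[of "\<lambda>y. binom_series \<kappa> (inner x y)"] by (simp add: ico_prod_def)
qed

lemma fps_X_mult_ico_sum: "fps_X * ico_sum (inner x) x = ico_sum (\<lambda>y. 1) x - 12"
proof -
  have "fps_X * ico_sum (inner x) x = (\<Sum>y\<in>Ico. binom_series 1 (inner x y) - 1)"
    unfolding ico_sum_def sum_distrib_left using binom_series_one_mult
    by (intro sum.cong) (simp_all add: algebra_simps)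
  then show ?thesis
    by (simp add: ico_sum_def sum_subtractf card_Ico)
qed

lemma sum_axis_ico_sum:
  "(\<Sum>i\<in>UNIV. fps_const (u $ i) * ico_sum (inner (axis i 1)) x) = ico_sum (inner u) x"
proof -
  have "(\<Sum>i\<in>UNIV. fps_const (u $ i) * ico_sum (inner (axis i 1)) x)
      = (\<Sum>y\<in>Ico. (\<Sum>i\<in>UNIV. fps_const (u $ i) * fps_const (inner (axis i 1) y)) * binom_series 1 (inner x y))"
    unfolding ico_sum_def
    by (simp only: sum_distrib_left sum_distrib_right mult.assoc) (rule sum.swap)
  then show ?thesis
    by (simp only: sum_axis_fps_const_inner ico_sum_def)
qed

lemma fps_deriv_ico_prod: "fps_deriv (ico_prod \<kappa> x) = fps_const \<kappa> * ico_prod \<kappa> x * ico_sum (inner x) x"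
proof -
  have "fps_deriv (ico_prod \<kappa> x)
      = ico_prod \<kappa> x * (\<Sum>y\<in>Ico. fps_const \<kappa> * (fps_const (inner x y) * binom_series 1 (inner x y)))"
    unfolding ico_prod_def
    by (rule fps_deriv_prod_logarithmic[OF finite_Ico])
      (simp add: fps_deriv_binom_series binom_series_add algebra_simps flip: fps_const_mult)
  then show ?thesis
    by (simp add: ico_sum_def sum_distrib_left ac_simps)
qed

lemma fps_deriv_Fser:
  "fps_deriv (Fser \<kappa> y0 x)
    = fps_const (inner x y0) * binom_series 1 (inner x y0) * binom_series 1 (inner x y0) * ico_prod \<kappa> x
      + fps_const \<kappa> * binom_series 1 (inner x y0) * ico_prod \<kappa> x * ico_sum (inner x) x"
  using binom_series_add[of 1 1 "inner x y0"]
  by (simp add: Fser_eq fps_deriv_binom_series fps_deriv_ico_prod algebra_simps)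

lemma Fser_compose_uminus: "Fser \<kappa> y0 x oo - fps_X = binom_series 1 (- inner x y0) * ico_prod \<kappa> x"
  by (simp add: Fser_eq fps_compose_mult_distrib binom_series_compose_uminus ico_prod_compose_uminus)

lemma has_fps_coeff_derivative_ico_prod:
  "has_fps_coeff_derivative (\<lambda>t. ico_prod \<kappa> (x + t *\<^sub>R e))
     (fps_const \<kappa> * fps_X * ico_prod \<kappa> x * ico_sum (inner e) x) 0"
proof -
  have "has_fps_coeff_derivative (\<lambda>t. binom_series \<kappa> (inner (x + t *\<^sub>R e) y))
      (binom_series \<kappa> (inner x y) *
        (fps_const \<kappa> * fps_X * (fps_const (inner e y) * binom_series 1 (inner x y)))) 0" for y
    using has_fps_coeff_derivative_binom_series[of \<kappa> "inner x y" "inner e y"]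
    by (simp add: inner_add_left binom_series_add algebra_simps flip: fps_const_mult)
  then have "has_fps_coeff_derivative (\<lambda>t. \<Prod>y\<in>Ico. binom_series \<kappa> (inner (x + t *\<^sub>R e) y))
      ((\<Prod>y\<in>Ico. binom_series \<kappa> (inner (x + 0 *\<^sub>R e) y)) *
        (\<Sum>y\<in>Ico. fps_const \<kappa> * fps_X * (fps_const (inner e y) * binom_series 1 (inner x y)))) 0"
    by (intro has_fps_coeff_derivative_prod[OF finite_Ico]) simp
  then show ?thesis
    by (simp add: ico_prod_def ico_sum_def sum_distrib_left ac_simps)
qed

lemma has_fps_coeff_derivative_Fser:
  "has_fps_coeff_derivative (\<lambda>t. Fser \<kappa> y0 (x + t *\<^sub>R e))
     (fps_X * binom_series 1 (inner x y0) * ico_prod \<kappa> x *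
       (fps_const (inner e y0) * binom_series 1 (inner x y0) + fps_const \<kappa> * ico_sum (inner e) x)) 0"
proof -
  have "has_fps_coeff_derivative (\<lambda>t. binom_series 1 (inner (x + t *\<^sub>R e) y0))
      (fps_const (inner e y0) * fps_X * binom_series 1 (inner x y0) * binom_series 1 (inner x y0)) 0"
    using has_fps_coeff_derivative_binom_series[of 1 "inner x y0" "inner e y0"]
    by (simp add: inner_add_left binom_series_add[of 1 1, simplified] algebra_simps)
  from has_fps_coeff_derivative_mult[OF this has_fps_coeff_derivative_ico_prod] show ?thesis
    by (simp add: Fser_eq algebra_simps)
qed

lemma Dunkl_Fser:
  "Abs_fps (\<lambda>n. \<Sum>i\<in>UNIV. u $ i * Dunkl \<kappa> i (\<lambda>z. fps_nth (Fser \<kappa> y0 z) n) x)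
    = fps_X * binom_series 1 (inner x y0) * ico_prod \<kappa> x *
        (fps_const (inner u y0) * binom_series 1 (inner x y0) + fps_const \<kappa> * ico_sum (inner u) x)
      + fps_const \<kappa> * (\<Sum>v\<in>Rplus. fps_const (inner u v / inner x v) * (Fser \<kappa> y0 x - Fser \<kappa> y0 (refl v x)))"
proof -
  define A where "A = fps_X * binom_series 1 (inner x y0) * ico_prod \<kappa> x"
  define D where "D e = A * (fps_const (inner e y0) * binom_series 1 (inner x y0) + fps_const \<kappa> * ico_sum (inner e) x)"
    for e
  have "(\<Sum>i\<in>UNIV. fps_const (u $ i) * D (axis i 1))
      = (\<Sum>i\<in>UNIV. A * binom_series 1 (inner x y0) * (fps_const (u $ i) * fps_const (inner (axis i 1) y0))
          + A * fps_const \<kappa> * (fps_const (u $ i) * ico_sum (inner (axis i 1)) x))"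
    unfolding D_def by (rule sum.cong[OF refl]) algebra
  also have "\<dots> = D u"
    unfolding D_def sum.distrib by (simp only: sum_axis_fps_const_inner sum_axis_ico_sum flip: sum_distrib_left)
      algebra
  finally have "(\<Sum>i\<in>UNIV. fps_const (u $ i) * D (axis i 1)) = D u" .
  moreover have "has_fps_coeff_derivative (\<lambda>t. Fser \<kappa> y0 (x + t *\<^sub>R e)) (D e) 0" for e
    unfolding D_def A_def by (rule has_fps_coeff_derivative_Fser)
  ultimately show ?thesis
    using Dunkl_fps[of "Fser \<kappa> y0" x D] unfolding D_def A_def by simp
qed

(* Here y0 sigma_v - y0 is a multiple of v, and the hypothesis <x,v> \<noteq> 0 cancels the denominator. *)
lemma Fser_refl_diff:
  assumes "v \<in> Rplus" and "inner x v \<noteq> 0"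
  shows "fps_const (inner u v / inner x v) * (Fser \<kappa> y0 x - Fser \<kappa> y0 (refl v x))
    = fps_X * binom_series 1 (inner x y0) * ico_prod \<kappa> x *
        (fps_const (inner u (y0 - refl v y0)) * binom_series 1 (inner x (refl v y0)))"
proof -
  define c where "c = 2 * inner y0 v / (norm v)\<^sup>2"
  have x_diff: "inner x y0 - inner x (refl v y0) = c * inner x v"
    and u_diff: "inner u (y0 - refl v y0) = c * inner u v"
    by (simp_all add: c_def diff_refl flip: inner_diff_right)
  have "Fser \<kappa> y0 x - Fser \<kappa> y0 (refl v x)
      = (binom_series 1 (inner x y0) - binom_series 1 (inner x (refl v y0))) * ico_prod \<kappa> x"
    by (simp add: Fser_eq inner_refl_left ico_prod_refl[OF assms(1)] algebra_simps)
  also have "\<dots> = fps_const (c * inner x v) * fps_X * binom_series 1 (inner x y0)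
      * binom_series 1 (inner x (refl v y0)) * ico_prod \<kappa> x"
    by (simp only: binom_series_one_diff x_diff)
  moreover have "fps_const (inner u v / inner x v) * fps_const (c * inner x v)
      = fps_const (inner u (y0 - refl v y0))"
    using assms(2) by (simp add: u_diff)
  ultimately show ?thesis
    by algebra
qed

lemma sum_Fser_refl_diff:
  assumes "y0 \<in> Ico" and "\<forall>v\<in>Rplus. inner x v \<noteq> 0"
  shows "(\<Sum>v\<in>Rplus. fps_const (inner u v / inner x v) * (Fser \<kappa> y0 x - Fser \<kappa> y0 (refl v x)))
    = fps_X * binom_series 1 (inner x y0) * ico_prod \<kappa> x *
        (fps_const (inner u y0) * ico_sum (\<lambda>y. 1) x - ico_sum (inner u) x
          - 2 * fps_const (inner u y0) * binom_series 1 (- inner x y0))"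
proof -
  define h where "h y = fps_const (inner u (y0 - y)) * binom_series 1 (inner x y)" for y
  have "(\<Sum>v\<in>Rplus. fps_const (inner u v / inner x v) * (Fser \<kappa> y0 x - Fser \<kappa> y0 (refl v x)))
      = fps_X * binom_series 1 (inner x y0) * ico_prod \<kappa> x * (\<Sum>v\<in>Rplus. h (refl v y0))"
    using assms(2) by (simp add: Fser_refl_diff h_def sum_distrib_left)
  also have "(\<Sum>v\<in>Rplus. h (refl v y0)) = 5 * h y0 + (\<Sum>y\<in>Ico. h y) - h y0 - h (- y0)"
    by (rule sum_Rplus_refl[OF assms(1)])
  also have "h y0 = 0"
    by (simp add: h_def)
  also have "h (- y0) = 2 * fps_const (inner u y0) * binom_series 1 (- inner x y0)"
  proof -
    have "inner u (y0 - - y0) = 2 * inner u y0"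
      by (simp only: diff_minus_eq_add inner_add_right mult_2)
    then show ?thesis
      by (simp add: h_def flip: fps_const_mult)
  qed
  also have "(\<Sum>y\<in>Ico. h y) = fps_const (inner u y0) * ico_sum (\<lambda>y. 1) x - ico_sum (inner u) x"
    by (simp add: h_def ico_sum_def inner_diff_right sum_subtractf sum_distrib_left algebra_simps
        flip: fps_const_sub)
  finally show ?thesis
    by simp
qed

theorem mainTheorem1:
  fixes \<kappa> :: real and u y0 x :: "real^3"
  assumes "\<kappa> \<ge> 0"
    and "y0 \<in> Ico"
    and "\<forall>v\<in>Rplus. inner x v \<noteq> 0"
  shows "Abs_fps (\<lambda>n. \<Sum>i\<in>UNIV. u $ i * Dunkl \<kappa> i (\<lambda>z. fps_nth (Fser \<kappa> y0 z) n) x)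
       = fps_const (inner u y0) *
           (fps_X\<^sup>2 * fps_deriv (Fser \<kappa> y0 x)
            + fps_const (1 + 11 * \<kappa>) * fps_X * Fser \<kappa> y0 x
            - fps_const \<kappa> * fps_X * (Fser \<kappa> y0 x oo (- fps_X)))"
proof -
  have const_eq: "fps_const (1 + 11 * \<kappa>) = 1 + 11 * fps_const \<kappa>"
    by (simp flip: fps_const_add fps_const_mult)
  show ?thesis
    unfolding Dunkl_Fser sum_Fser_refl_diff[OF assms(2,3)] fps_deriv_Fser const_eq
    unfolding Fser_compose_uminus
    unfolding Fser_eq
    using binom_series_one_mult[of "inner x y0"] binom_series_one_mult[of "- inner x y0", folded fps_const_neg]
      fps_X_mult_ico_sum[of x]
    by algebra
qed

end
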